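(* For every positive integer $n$, $$\big(\mathrm{Id}\ast(\mathrm{Id}\cdot\delta)\big)(n)=\sigma(n)\delta(n)-\big(\mathrm{Id}^2\ast\delta\big)(n),$$ where $\mathrm{Id}\cdot\delta$ is $n\mapsto n\delta(n)$ and $\mathrm{Id}^2(n)=n^2$.
   Context: The arithmetic derivative $\delta$ is defined by $\delta(p)=1$ for every prime $p$ and $\delta(mn)=m\delta(n)+n\delta(m)$ for all positive integers $m,n$; equivalently $\delta(1)=0$ and $\delta(n)=n\sum_{p^\alpha\| n}\alpha/p$. $\mathrm{Id}(n)=n$, $\sigma(n)$ is the sum of the positive divisors of $n$. The Dirichlet convolution is $(u\ast v)(n)=\sum_{d\mid n}u(d)v(n/d)$. *)

theory Defs
  imports "HOL-Computational_Algebra.Computational_Algebra" "HOL-Number_Theory.Number_Theory"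
begin

text \<open>Arithmetic derivative: delta 1 = 0 and delta n = n * (sum over p^a || n of a/p).
  Written over the naturals as the sum of a * (n div p), which is exact since p divides n.\<close>
definition arith_deriv :: "nat \<Rightarrow> nat" where
  "arith_deriv n = (\<Sum>p\<in>prime_factors n. multiplicity p n * (n div p))"

definition divisor_sum :: "nat \<Rightarrow> nat" where
  "divisor_sum n = (\<Sum>d | d dvd n. d)"

definition dirichlet_conv :: "(nat \<Rightarrow> nat) \<Rightarrow> (nat \<Rightarrow> nat) \<Rightarrow> nat \<Rightarrow> nat" where
  "dirichlet_conv u v n = (\<Sum>d | d dvd n. u d * v (n div d))"

end

theory Submission
  imports Defs
begin

text \<open>Summing the Leibniz rule \<open>d \<delta>(n) = d \<delta>(d \<cdot> n/d) = d (n/d) \<delta>(d) + d\<^sup>2 \<delta>(n/d)\<close>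
  over the divisors \<open>d\<close> of \<open>n\<close> gives \<open>\<sigma>(n) \<delta>(n) = ((Id\<cdot>\<delta>) * Id)(n) + (Id\<^sup>2 * \<delta>)(n)\<close>,
  and Dirichlet convolution is commutative.\<close>

lemma arith_deriv_eq_sum_superset:
  assumes "finite S" "prime_factors n \<subseteq> S" "\<forall>p\<in>S. prime p"
  shows "arith_deriv n = (\<Sum>p\<in>S. multiplicity p n * (n div p))"
  unfolding arith_deriv_def
proof (rule sum.mono_neutral_left[OF assms(1,2)])
  show "\<forall>p\<in>S - prime_factors n. multiplicity p n * (n div p) = 0"
    using assms(3) by (auto simp: prime_factors_multiplicity)
qed

lemma multiplicity_mult_div_prime:
  assumes "prime (p::nat)"
  shows "multiplicity p d * (d * e div p) = e * (multiplicity p d * (d div p))"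
proof (cases "p dvd d")
  case True
  then obtain k where "d = p * k" by blast
  then show ?thesis using assms by (simp add: prime_gt_0_nat)
next
  case False
  then show ?thesis by (simp add: not_dvd_imp_multiplicity_0)
qed

lemma arith_deriv_mult:
  assumes "d > 0" "e > 0"
  shows "arith_deriv (d * e) = e * arith_deriv d + d * arith_deriv e"
proof -
  let ?S = "prime_factors d \<union> prime_factors e"
  have primes: "\<forall>p\<in>?S. prime p" by auto
  have "prime_factors (d * e) = ?S"
    using assms by (simp add: prime_factors_product)
  then have "arith_deriv (d * e) = (\<Sum>p\<in>?S. multiplicity p (d * e) * (d * e div p))"
    using arith_deriv_eq_sum_superset[of ?S "d * e"] primes by simp
  also have "\<dots> = (\<Sum>p\<in>?S. e * (multiplicity p d * (d div p)) + d * (multiplicity p e * (e div p)))"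
  proof (rule sum.cong[OF refl])
    fix p assume "p \<in> ?S"
    then have p: "prime p" by auto
    have "multiplicity p (d * e) = multiplicity p d + multiplicity p e"
      using assms p by (simp add: prime_elem_multiplicity_mult_distrib)
    then show "multiplicity p (d * e) * (d * e div p)
        = e * (multiplicity p d * (d div p)) + d * (multiplicity p e * (e div p))"
      using multiplicity_mult_div_prime[OF p, of d e] multiplicity_mult_div_prime[OF p, of e d]
      by (metis add_mult_distrib mult.commute)
  qed
  also have "\<dots> = e * arith_deriv d + d * arith_deriv e"
    using arith_deriv_eq_sum_superset[of ?S d] arith_deriv_eq_sum_superset[of ?S e] primes
    by (simp add: sum.distrib sum_distrib_left)
  finally show ?thesis .
qed

lemma sum_divisors_mirror:
  fixes n :: nat
  assumes "n > 0"
  shows "(\<Sum>d | d dvd n. f d) = (\<Sum>d | d dvd n. f (n div d))"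
  by (rule sum.reindex_bij_witness[where i="\<lambda>d. n div d" and j="\<lambda>d. n div d"])
    (use assms in \<open>auto simp: div_dvd_div\<close>)

lemma dirichlet_conv_commute:
  assumes "n > 0"
  shows "dirichlet_conv u v n = dirichlet_conv v u n"
proof -
  have "dirichlet_conv u v n = (\<Sum>d | d dvd n. u (n div d) * v (n div (n div d)))"
    unfolding dirichlet_conv_def by (rule sum_divisors_mirror[OF assms])
  also have "\<dots> = dirichlet_conv v u n"
    unfolding dirichlet_conv_def using assms by (intro sum.cong) auto
  finally show ?thesis .
qed

lemma divisor_sum_times_arith_deriv:
  assumes "n > 0"
  shows "divisor_sum n * arith_deriv n
    = dirichlet_conv (\<lambda>k. k * arith_deriv k) (\<lambda>k. k) n + dirichlet_conv (\<lambda>k. k ^ 2) arith_deriv n"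
proof -
  have "divisor_sum n * arith_deriv n = (\<Sum>d | d dvd n. d * arith_deriv (d * (n div d)))"
    unfolding divisor_sum_def by (simp add: sum_distrib_right)
  also have "\<dots> = (\<Sum>d | d dvd n. d * arith_deriv d * (n div d) + d ^ 2 * arith_deriv (n div d))"
  proof (rule sum.cong[OF refl])
    fix d assume "d \<in> {d. d dvd n}"
    then have "d > 0" "n div d > 0"
      using assms by (auto intro!: Nat.gr0I simp: dvd_div_eq_0_iff)
    then show "d * arith_deriv (d * (n div d)) = d * arith_deriv d * (n div d) + d ^ 2 * arith_deriv (n div d)"
      by (simp add: arith_deriv_mult algebra_simps power2_eq_square)
  qed
  also have "\<dots> = dirichlet_conv (\<lambda>k. k * arith_deriv k) (\<lambda>k. k) n + dirichlet_conv (\<lambda>k. k ^ 2) arith_deriv n"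
    unfolding dirichlet_conv_def by (simp add: sum.distrib)
  finally show ?thesis .
qed

theorem corollary2p4:
  fixes n :: nat
  assumes "n > 0"
  shows "int (dirichlet_conv (\<lambda>k. k) (\<lambda>k. k * arith_deriv k) n)
         = int (divisor_sum n * arith_deriv n) - int (dirichlet_conv (\<lambda>k. k ^ 2) arith_deriv n)"
  using divisor_sum_times_arith_deriv[OF assms] dirichlet_conv_commute[OF assms]
  by simp

end
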